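(* Let $n\ge2$ and let $a_1,\dots,a_{n-1}\in\mathbb C$ be fixed. For $a\in\mathbb C$ set $h_a(z)=z^n+a_{n-1}z^{n-1}+a^n$ and $f_a(z)=z^n+a_{n-1}z^{n-1}+\cdots+a_1z+a^n$. Then $$\lim_{|a|\to+\infty}d_F\bigl(Z(h_a),Z(f_a)\bigr)=0.$$
   Context: $Z(f)$ denotes the roots of $f$ counted with multiplicity. For multisets $A=\{u_1,\dots,u_m\}$, $B=\{v_1,\dots,v_m\}$ in $\mathbb C$, $d_F(A,B)=\min_{\sigma}\max_k|u_k-v_{\sigma(k)}|$ over permutations $\sigma$ of $\{1,\dots,m\}$. *)

theory Defs
  imports "HOL-Analysis.Analysis" "HOL-Computational_Algebra.Computational_Algebra"
begin

abbreviation Zroots :: "complex poly \<Rightarrow> complex multiset" where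
  "Zroots f \<equiv> proots f"

text \<open>Matching distance between two multisets of the same size m:
  minimum over all pairings (equivalently, orderings xs, ys of the multisets,
  i.e. permutations) of the maximal distance of paired points.\<close>
definition dF :: "complex multiset \<Rightarrow> complex multiset \<Rightarrow> real" where
  "dF A B = Min {Max ((\<lambda>k. cmod (xs ! k - ys ! k)) ` {..<size A}) | xs ys.
                   mset xs = A \<and> mset ys = B}"

end

theory Submission
  imports Defs
begin

(* The engine is a matching principle for monic polynomials P, Q of degree n: if the roots of P
   are sigma-separated, 2 rho <= sigma, and |P - Q| < rho (sigma/2)^(n-1) at every root of P and
   of Q, then every root of Q lies within rho of exactly one root of P and every root of P has
   such a partner, so the roots can be paired by a permutation.  All polynomials involved belong
   to the family fpoly n d a = z^n + d_{n-1} z^{n-1} + ... + d_1 z + a^n, whose roots lie in the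
   disc |z| < 2|a| once |a| dominates the coefficients.  With t = |a| large, the principle is
   applied twice:
     1. P = z^n + a^n, with roots a w_i (w_i the roots of z^n + 1, separated by mu t), and
        Q = h_a: |P - Q| = O(t^(n-1)), so the roots of h_a stay within a constant R of the a w_i
        and are still mu t / 2-separated;
     2. P = h_a and Q = f_a: |P - Q| = O(t^(n-2)) against the admissible eps (mu t / 4)^(n-1),
        so the roots of f_a are within eps of those of h_a, which bounds dF. *)

definition separated :: "real \<Rightarrow> complex list \<Rightarrow> bool" where
  "separated \<sigma> xs \<longleftrightarrow> (\<forall>i<length xs. \<forall>j<length xs. i \<noteq> j \<longrightarrow> \<sigma> \<le> cmod (xs!i - xs!j))"

lemma distinct_imp_separated:
  assumes "distinct xs"
  shows "\<exists>\<mu>>0. separated \<mu> xs"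
proof -
  define gaps where "gaps = {cmod (xs!i - xs!j) | i j. i < length xs \<and> j < length xs \<and> i \<noteq> j}"
  have "gaps \<subseteq> (\<lambda>(i, j). cmod (xs!i - xs!j)) ` ({..<length xs} \<times> {..<length xs})"
    unfolding gaps_def by auto
  hence finite: "finite (insert 1 gaps)" by (auto intro: finite_subset)
  have "\<forall>g \<in> insert 1 gaps. 0 < g"
    using assms unfolding gaps_def by (auto simp: nth_eq_iff_index_eq)
  hence "0 < Min (insert 1 gaps)" using finite by simp
  moreover have "separated (Min (insert 1 gaps)) xs"
    unfolding separated_def using finite by (auto intro!: Min_le simp: gaps_def)
  ultimately show ?thesis by blast
qed

lemma separated_scale:
  assumes "separated \<mu> ws"
  shows "separated (cmod a * \<mu>) (map ((*) a) ws)"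
  using assms unfolding separated_def
  by (auto simp: right_diff_distrib[symmetric] norm_mult intro: mult_left_mono)

lemma separated_perturb:
  assumes sep: "separated \<sigma> xs" and len: "length ys = length xs"
    and close: "\<forall>i<length xs. cmod (xs!i - ys!i) < R" and \<sigma>': "\<sigma>' \<le> \<sigma> - 2 * R"
  shows "separated \<sigma>' ys"
  unfolding separated_def
proof (intro allI impI)
  fix i j assume ij: "i < length ys" "j < length ys" "i \<noteq> j"
  have "cmod (xs!i - xs!j) = cmod ((xs!i - ys!i) + (ys!i - ys!j) - (xs!j - ys!j))" by simp
  also have "\<dots> \<le> cmod ((xs!i - ys!i) + (ys!i - ys!j)) + cmod (xs!j - ys!j)"
    by (rule norm_triangle_ineq4)
  also have "\<dots> \<le> cmod (xs!i - ys!i) + cmod (ys!i - ys!j) + cmod (xs!j - ys!j)"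
    using norm_triangle_ineq[of "xs!i - ys!i" "ys!i - ys!j"] by simp
  finally have "cmod (xs!i - xs!j)
                  \<le> cmod (xs!i - ys!i) + cmod (ys!i - ys!j) + cmod (xs!j - ys!j)" .
  moreover have "\<sigma> \<le> cmod (xs!i - xs!j)" using sep ij len by (auto simp: separated_def)
  moreover have "cmod (xs!i - ys!i) < R" "cmod (xs!j - ys!j) < R" using close ij len by auto
  ultimately show "\<sigma>' \<le> cmod (ys!i - ys!j)" using \<sigma>' by linarith
qed

(* If the monic polynomial with sigma-separated roots xs is small at s, then s is close to one of
   its roots: otherwise the nearest root is at distance >= rho and all others at >= sigma/2. *)
lemma close_to_some_point:
  fixes xs :: "complex list" and s :: complex
  assumes sep: "separated \<sigma> xs" and len: "length xs = n" and n: "n > 0"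
    and \<sigma>: "0 \<le> \<sigma>" and small: "cmod (\<Prod>i<n. s - xs!i) < \<rho> * (\<sigma>/2)^(n-1)"
  shows "\<exists>i<n. cmod (s - xs!i) < \<rho>"
proof -
  have "Min ((\<lambda>i. cmod (s - xs!i)) ` {..<n}) \<in> (\<lambda>i. cmod (s - xs!i)) ` {..<n}"
    using n by (intro Min_in) auto
  then obtain j where j: "j < n" "cmod (s - xs!j) = Min ((\<lambda>i. cmod (s - xs!i)) ` {..<n})"
    by auto
  have nearest: "cmod (s - xs!j) \<le> cmod (s - xs!i)" if "i < n" for i
    unfolding j(2) using that by (intro Min_le) auto
  have far: "\<sigma>/2 \<le> cmod (s - xs!i)" if "i < n" "i \<noteq> j" for i
  proof -
    have "\<sigma> \<le> cmod (xs!i - xs!j)" using sep that j len by (auto simp: separated_def)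
    also have "\<dots> \<le> cmod (s - xs!j) + cmod (s - xs!i)"
      using norm_triangle_ineq4[of "s - xs!j" "s - xs!i"] by simp
    finally show ?thesis using nearest[OF that(1)] by linarith
  qed
  have "cmod (s - xs!j) * (\<sigma>/2)^(n-1) = cmod (s - xs!j) * (\<Prod>i\<in>{..<n}-{j}. \<sigma>/2)"
    using j(1) by simp
  also have "\<dots> \<le> cmod (s - xs!j) * (\<Prod>i\<in>{..<n}-{j}. cmod (s - xs!i))"
    using far \<sigma> by (intro mult_left_mono prod_mono) auto
  also have "\<dots> = cmod (\<Prod>i<n. s - xs!i)"
    using j(1) by (simp add: prod_norm norm_mult prod.remove[of "{..<n}" j])
  finally have "cmod (s - xs!j) * (\<sigma>/2)^(n-1) < \<rho> * (\<sigma>/2)^(n-1)" using small by linarith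
  hence "cmod (s - xs!j) < \<rho>" by (rule mult_right_less_imp_less) (use \<sigma> in simp)
  thus ?thesis using j by blast
qed

(* Conversely, if every q_k lies within rho of some x_j, and the polynomial with roots qs is small
   at x_i, then some q_k lies within rho of x_i: otherwise all q_k are at distance >= sigma/2. *)
lemma partner_of_separated_point:
  fixes xs qs :: "complex list"
  assumes sep: "separated \<sigma> xs" and len: "length xs = n" "length qs = n" and n: "n > 0"
    and \<rho>: "0 < \<rho>" "2 * \<rho> \<le> \<sigma>" and i: "i < n"
    and near_some: "\<forall>k<n. \<exists>j<n. cmod (xs!j - qs!k) < \<rho>"
    and small: "cmod (\<Prod>k<n. xs!i - qs!k) < \<rho> * (\<sigma>/2)^(n-1)"
  shows "\<exists>k<n. cmod (xs!i - qs!k) < \<rho>"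
proof (rule ccontr)
  assume none: "\<not> ?thesis"
  have far: "\<sigma>/2 \<le> cmod (xs!i - qs!k)" if k: "k < n" for k
  proof -
    obtain j where j: "j < n" "cmod (xs!j - qs!k) < \<rho>" using near_some k by blast
    have "j \<noteq> i" using j none k by blast
    hence "\<sigma> \<le> cmod (xs!i - xs!j)" using sep len i j by (auto simp: separated_def)
    also have "\<dots> \<le> cmod (xs!i - qs!k) + cmod (xs!j - qs!k)"
      using norm_triangle_ineq4[of "xs!i - qs!k" "xs!j - qs!k"] by simp
    finally show ?thesis using j \<rho> by linarith
  qed
  have "\<rho> * (\<sigma>/2)^(n-1) \<le> (\<sigma>/2) * (\<sigma>/2)^(n-1)"
    using \<rho> by (intro mult_right_mono) auto
  also have "\<dots> = (\<Prod>k<n. \<sigma>/2)" using n by (simp add: power_eq_if)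
  also have "\<dots> \<le> (\<Prod>k<n. cmod (xs!i - qs!k))"
    using far \<rho> by (intro prod_mono) auto
  also have "\<dots> = cmod (\<Prod>k<n. xs!i - qs!k)" by (simp add: prod_norm)
  finally show False using small by linarith
qed

lemma permutation_from_unique_partners:
  fixes r :: "nat \<Rightarrow> nat \<Rightarrow> bool"
  assumes some: "\<forall>k<n. \<exists>i<n. r k i" and covered: "\<forall>i<n. \<exists>k<n. r k i"
    and unique: "\<forall>k<n. \<forall>i<n. \<forall>j<n. r k i \<longrightarrow> r k j \<longrightarrow> i = j"
  shows "\<exists>\<pi>. \<pi> permutes {..<n} \<and> (\<forall>i<n. r (\<pi> i) i)"
proof -
  obtain g where g: "\<And>k. k < n \<Longrightarrow> g k < n \<and> r k (g k)" using some by metis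
  define g' where "g' k = (if k < n then g k else k)" for k
  have onto: "g' ` {..<n} = {..<n}"
  proof
    show "g' ` {..<n} \<subseteq> {..<n}" using g by (auto simp: g'_def)
    show "{..<n} \<subseteq> g' ` {..<n}"
    proof
      fix i assume "i \<in> {..<n}"
      then obtain k where "k < n" "r k i" "i < n" using covered by auto
      hence "g' k = i" using g[of k] unique by (auto simp: g'_def)
      thus "i \<in> g' ` {..<n}" using \<open>k < n\<close> by auto
    qed
  qed
  hence "bij_betw g' {..<n} {..<n}"
    by (simp add: bij_betw_def eq_card_imp_inj_on)
  hence perm: "g' permutes {..<n}" by (rule bij_imp_permutes) (simp add: g'_def)
  have "r (inv g' i) i" if "i < n" for i
  proof -
    have "inv g' i < n" using permutes_in_image[OF permutes_inv[OF perm]] that by simp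
    thus ?thesis using g permutes_inverses(1)[OF perm, of i] by (metis g'_def)
  qed
  thus ?thesis using permutes_inv[OF perm] by blast
qed

lemma matching_of_close_roots:
  fixes xs qs :: "complex list"
  assumes len: "length xs = n" "length qs = n" and n: "n > 0" and sep: "separated \<sigma> xs"
    and \<rho>: "0 < \<rho>" "2 * \<rho> \<le> \<sigma>"
    and close: "\<forall>z \<in> set xs \<union> set qs.
                  cmod ((\<Prod>i<n. z - xs!i) - (\<Prod>k<n. z - qs!k)) < \<rho> * (\<sigma>/2)^(n-1)"
  shows "\<exists>\<pi>. \<pi> permutes {..<n} \<and> (\<forall>i<n. cmod (xs!i - qs!\<pi> i) < \<rho>)"
proof -
  have at_qs: "cmod (\<Prod>i<n. qs!k - xs!i) < \<rho> * (\<sigma>/2)^(n-1)" if "k < n" for k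
  proof -
    have zero: "(\<Prod>k'<n. qs!k - qs!k') = 0" using that by (intro prod_zero) auto
    have "qs!k \<in> set xs \<union> set qs" using that len by simp
    from close[rule_format, OF this] show ?thesis by (simp add: zero)
  qed
  have at_xs: "cmod (\<Prod>k<n. xs!i - qs!k) < \<rho> * (\<sigma>/2)^(n-1)" if "i < n" for i
  proof -
    have zero: "(\<Prod>i'<n. xs!i - xs!i') = 0" using that by (intro prod_zero) auto
    have "xs!i \<in> set xs \<union> set qs" using that len by simp
    from close[rule_format, OF this] show ?thesis by (simp add: zero)
  qed
  have near_some: "\<exists>i<n. cmod (xs!i - qs!k) < \<rho>" if "k < n" for k
    using close_to_some_point[OF sep len(1) n _ at_qs[OF that]] \<rho>
    by (auto simp: norm_minus_commute)
  show ?thesis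
  proof (rule permutation_from_unique_partners, safe)
    fix k assume "k < n"
    thus "\<exists>i<n. cmod (xs!i - qs!k) < \<rho>" by (rule near_some)
  next
    fix k i j assume "k < n" "i < n" "j < n"
      and near: "cmod (xs!i - qs!k) < \<rho>" "cmod (xs!j - qs!k) < \<rho>"
    have "cmod (xs!i - xs!j) \<le> cmod (xs!i - qs!k) + cmod (xs!j - qs!k)"
      using norm_triangle_ineq4[of "xs!i - qs!k" "xs!j - qs!k"] by simp
    with near \<rho> have "cmod (xs!i - xs!j) < \<sigma>" by linarith
    thus "i = j" using sep len \<open>i < n\<close> \<open>j < n\<close> by (force simp: separated_def)
  next
    fix i assume "i < n"
    thus "\<exists>k<n. cmod (xs!i - qs!k) < \<rho>"
      using partner_of_separated_point[OF sep len n \<rho>(1,2) _ _ at_xs] near_some by blast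
  qed
qed

lemma poly_eq_root_product:
  fixes p :: "complex poly"
  assumes monic: "lead_coeff p = 1" and xs: "mset xs = proots p"
  shows "poly p z = (\<Prod>i<length xs. z - xs!i)"
proof -
  have "poly p z = poly (smult (lead_coeff p) (\<Prod>x\<in>#proots p. [:-x, 1:])) z"
    by (simp only: complex_poly_decompose_multiset)
  also have "\<dots> = (\<Prod>x\<leftarrow>xs. z - x)"
    using monic by (simp add: poly_prod_mset xs[symmetric] prod_mset_prod_list[symmetric]
                        multiset.map_comp o_def)
  also have "\<dots> = (\<Prod>i<length xs. z - xs!i)"
    by (simp add: prod.list_conv_set_nth atLeast0LessThan)
  finally show ?thesis .
qed

lemma dF_less_if_paired:
  fixes xs ys :: "complex list"
  assumes len: "length xs = n" "length ys = n" and n: "n > 0"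
    and close: "\<forall>i<n. cmod (xs!i - ys!i) < \<epsilon>"
  shows "\<bar>dF (mset xs) (mset ys)\<bar> < \<epsilon>"
proof -
  define gap where "gap u v = Max ((\<lambda>k. cmod (u!k - v!k)) ` {..<n})" for u v :: "complex list"
  have lists_finite: "finite {u :: complex list. mset u = A}" for A
    by (rule finite_subset[of _ "{u. set u \<subseteq> set_mset A \<and> length u = size A}"])
       (auto intro: finite_lists_length_eq)
  define G where "G = {gap u v | u v. mset u = mset xs \<and> mset v = mset ys}"
  have dF_eq: "dF (mset xs) (mset ys) = Min G"
    unfolding dF_def G_def gap_def using len(1) by simp
  have "G = (\<lambda>(u, v). gap u v) ` ({u. mset u = mset xs} \<times> {v. mset v = mset ys})"
    unfolding G_def by auto
  hence finite: "finite G" using lists_finite by simp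
  have pairing: "gap xs ys \<in> G" unfolding G_def by auto
  have "gap xs ys < \<epsilon>" unfolding gap_def using n close by (subst Max_less_iff) auto
  moreover have "Min G \<le> gap xs ys" using finite pairing by (rule Min_le)
  moreover have "0 \<le> Min G"
  proof -
    have "Min G \<in> G" using finite pairing by (intro Min_in) auto
    then obtain u v where "Min G = gap u v" unfolding G_def by blast
    moreover have "0 \<le> gap u v" unfolding gap_def using n by (subst Max_ge_iff) auto
    ultimately show ?thesis by simp
  qed
  ultimately show ?thesis using dF_eq by simp
qed

definition fpoly :: "nat \<Rightarrow> (nat \<Rightarrow> complex) \<Rightarrow> complex \<Rightarrow> complex poly" where
  "fpoly n d a = monom 1 n + (\<Sum>k = 1..n - 1. monom (d k) k) + [:a ^ n:]"

lemma poly_fpoly: "poly (fpoly n d a) z = z^n + (\<Sum>k = 1..n - 1. d k * z^k) + a^n"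
  by (simp add: fpoly_def poly_monom poly_sum)

lemma fpoly_monic:
  assumes "n > 0"
  shows "degree (fpoly n d a) = n" "lead_coeff (fpoly n d a) = 1"
proof -
  define r where "r = (\<Sum>k = 1..n - 1. monom (d k) k) + [:a ^ n:]"
  have "degree r \<le> n - 1"
    unfolding r_def by (intro degree_add_le degree_sum_le) (auto intro: order_trans[OF degree_monom_le])
  hence r: "degree r < n" using assms by linarith
  have eq: "fpoly n d a = monom 1 n + r" by (simp add: fpoly_def r_def add.assoc)
  show deg: "degree (fpoly n d a) = n"
    unfolding eq using r by (subst degree_add_eq_left) (auto simp: degree_monom_eq)
  show "lead_coeff (fpoly n d a) = 1"
    unfolding deg unfolding eq using r by (simp add: coeff_eq_0)
qed

lemma norm_sum_monomials_le:
  fixes d :: "nat \<Rightarrow> complex"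
  assumes "finite K" and low: "\<forall>k\<in>K. d k \<noteq> 0 \<longrightarrow> k \<le> m" and r: "1 \<le> r" "cmod z \<le> r"
  shows "cmod (\<Sum>k\<in>K. d k * z^k) \<le> (\<Sum>k\<in>K. cmod (d k)) * r^m"
proof -
  have "cmod (d k) * cmod z^k \<le> cmod (d k) * r^m" if "k \<in> K" for k
  proof (cases "d k = 0")
    case False
    have "cmod z^k \<le> r^k" using r by (intro power_mono) auto
    also have "\<dots> \<le> r^m" using r low that False by (intro power_increasing) auto
    finally show ?thesis by (rule mult_left_mono) simp
  qed simp
  hence "(\<Sum>k\<in>K. cmod (d k * z^k)) \<le> (\<Sum>k\<in>K. cmod (d k) * r^m)"
    by (intro sum_mono) (simp add: norm_mult norm_power)
  thus ?thesis by (simp add: sum_distrib_right order_trans[OF norm_sum])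
qed

lemma fpoly_root_bound:
  fixes d :: "nat \<Rightarrow> complex"
  assumes n: "n \<ge> 2" and a: "1 \<le> cmod a" "(\<Sum>k = 1..n - 1. cmod (d k)) \<le> cmod a"
    and root: "poly (fpoly n d a) z = 0"
  shows "cmod z < 2 * cmod a"
proof (rule ccontr)
  assume "\<not> ?thesis"
  hence z: "2 * cmod a \<le> cmod z" by simp
  define w where "w = (\<Sum>k = 1..n - 1. d k * z^k)"
  have zn: "cmod z ^ n = cmod z * cmod z ^ (n - 1)" using n by (simp add: power_eq_if)
  have "cmod w \<le> (\<Sum>k = 1..n - 1. cmod (d k)) * cmod z ^ (n - 1)"
    unfolding w_def using a z by (intro norm_sum_monomials_le) auto
  also have "\<dots> \<le> (cmod z / 2) * cmod z ^ (n - 1)" using a z by (intro mult_right_mono) auto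
  finally have w: "cmod w \<le> cmod z ^ n / 2" using zn by simp
  have "cmod (a^n) \<le> (cmod z / 2)^n" unfolding norm_power using z by (intro power_mono) auto
  also have "\<dots> = cmod z ^ n / 2^n" by (simp add: power_divide)
  also have "\<dots> \<le> cmod z ^ n / 4"
    using power_increasing[of 2 n "2::real"] n by (intro divide_left_mono) auto
  finally have an: "cmod (a^n) \<le> cmod z ^ n / 4" .
  have "z^n + (w + a^n) = 0" using root unfolding poly_fpoly w_def by (simp add: add.assoc)
  hence "z^n = - (w + a^n)" by (simp only: eq_neg_iff_add_eq_0)
  hence "cmod z ^ n = cmod (w + a^n)" by (simp only: norm_power[symmetric] norm_minus_cancel)
  hence "cmod z ^ n \<le> cmod w + cmod (a^n)" using norm_triangle_ineq[of w "a^n"] by simp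
  moreover have "0 < cmod z ^ n" using a z by (intro zero_less_power) linarith
  ultimately show False using w an by linarith
qed

(* The matching principle for two members of the family: only the difference of the coefficient
   sequences on the disc |z| < 2|a| matters, since all roots lie there. *)
lemma fpoly_roots_matching:
  fixes d e :: "nat \<Rightarrow> complex" and xs :: "complex list"
  assumes n: "n \<ge> 2" and a: "1 \<le> cmod a"
    and d: "(\<Sum>k = 1..n - 1. cmod (d k)) \<le> cmod a" and e: "(\<Sum>k = 1..n - 1. cmod (e k)) \<le> cmod a"
    and xs: "length xs = n" "\<forall>z. poly (fpoly n d a) z = (\<Prod>i<n. z - xs!i)" "separated \<sigma> xs"
    and \<rho>: "0 < \<rho>" "2 * \<rho> \<le> \<sigma>"
    and diff: "\<forall>z. cmod z < 2 * cmod a \<longrightarrow>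
                 cmod (\<Sum>k = 1..n - 1. (d k - e k) * z^k) < \<rho> * (\<sigma>/2)^(n-1)"
  shows "\<exists>ys. length ys = n \<and> mset ys = proots (fpoly n e a) \<and> (\<forall>i<n. cmod (xs!i - ys!i) < \<rho>)"
proof -
  obtain qs where qs: "mset qs = proots (fpoly n e a)" using ex_mset by blast
  have len: "length qs = n"
    using qs fpoly_monic[of n] n by (metis size_mset size_proots_complex not_numeral_le_zero gr0I)
  have Q: "poly (fpoly n e a) z = (\<Prod>k<n. z - qs!k)" for z
    using poly_eq_root_product[OF _ qs] fpoly_monic[of n] len n by simp
  have roots_in_disc: "cmod z < 2 * cmod a" if "z \<in> set xs \<union> set qs" for z
  proof -
    have "poly (fpoly n d a) z = 0 \<or> poly (fpoly n e a) z = 0"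
      using that xs(1,2) len unfolding Q by (auto simp: in_set_conv_nth prod_zero)
    thus ?thesis using fpoly_root_bound[OF n a] d e by blast
  qed
  have "poly (fpoly n d a) z - poly (fpoly n e a) z = (\<Sum>k = 1..n - 1. (d k - e k) * z^k)" for z
    by (simp add: poly_fpoly left_diff_distrib sum_subtractf)
  hence "\<forall>z \<in> set xs \<union> set qs. cmod ((\<Prod>i<n. z - xs!i) - (\<Prod>k<n. z - qs!k)) < \<rho> * (\<sigma>/2)^(n-1)"
    using diff roots_in_disc xs(2) Q by metis
  then obtain \<pi> where \<pi>: "\<pi> permutes {..<n}" "\<forall>i<n. cmod (xs!i - qs!\<pi> i) < \<rho>"
    using matching_of_close_roots[OF xs(1) len _ xs(3) \<rho>] n by auto
  have "mset (permute_list \<pi> qs) = proots (fpoly n e a)" using \<pi>(1) qs len by simp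
  moreover have "\<forall>i<n. cmod (xs!i - permute_list \<pi> qs ! i) < \<rho>"
    using \<pi> len by (simp add: permute_list_nth)
  ultimately show ?thesis using len by (intro exI[of _ "permute_list \<pi> qs"]) simp
qed

lemma roots_of_minus_one:
  assumes n: "n > 0"
  obtains ws :: "complex list"
  where "length ws = n" "distinct ws" "\<forall>z. (\<Prod>i<n. z - ws!i) = z^n + 1"
proof -
  define p :: "complex poly" where "p = monom 1 n + [:1:]"
  have poly_p: "poly p z = z^n + 1" for z by (simp add: p_def poly_monom)
  have "p = fpoly n (\<lambda>_. 0) 1" by (simp add: p_def fpoly_def)
  hence deg: "degree p = n" and monic: "lead_coeff p = 1" using fpoly_monic[OF n] by simp_all
  obtain ws where ws: "mset ws = proots p" using ex_mset by blast
  have len: "length ws = n" using ws deg by (metis size_mset size_proots_complex)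
  have prod: "(\<Prod>i<n. z - ws!i) = z^n + 1" for z
    using poly_eq_root_product[OF monic ws] len poly_p by simp
  have "rsquarefree p"
    unfolding rsquarefree_roots
  proof (intro allI notI)
    fix w assume w: "poly p w = 0 \<and> poly (pderiv p) w = 0"
    have "pderiv p = monom (of_nat n) (n - 1)" by (simp add: p_def pderiv_add pderiv_monom)
    hence "w = 0" using w n by (simp add: poly_monom)
    thus False using w n by (simp add: poly_p power_0_left)
  qed
  hence "count (mset ws) w \<le> 1" for w
    unfolding ws rsquarefree_def by (metis count_proots le_refl zero_le_one)
  hence distinct: "distinct ws"
    unfolding distinct_count_atmost_1 by (auto intro: antisym simp: Suc_le_eq count_mset_gt_0)
  show ?thesis using len distinct prod by (intro that) auto
qed

lemma scaled_roots_product: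
  fixes ws :: "complex list"
  assumes "length ws = n" "\<forall>z. (\<Prod>i<n. z - ws!i) = z^n + 1" and a: "a \<noteq> 0"
  shows "(\<Prod>i<n. z - a * ws!i) = z^n + a^n"
proof -
  have "(\<Prod>i<n. z - a * ws!i) = (\<Prod>i<n. a * (z/a - ws!i))"
    using a by (intro prod.cong) (auto simp: field_simps)
  also have "\<dots> = a^n * ((z/a)^n + 1)" using assms(2) by (simp add: prod.distrib)
  also have "\<dots> = z^n + a^n" using a by (simp add: field_simps power_divide)
  finally show ?thesis .
qed

(* Step 1: a perturbation of z^n + a^n by lower terms of total coefficient mass S has its roots
   within R of the roots a w_i of z^n + a^n, once |a| is large; hence they are still separated
   by a constant multiple of |a|. *)
lemma roots_near_scaled_unit_roots:
  fixes n :: nat and e :: "nat \<Rightarrow> complex" and ws :: "complex list" and a :: complex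
  defines "S \<equiv> \<Sum>k = 1..n - 1. cmod (e k)"
  assumes n: "n \<ge> 2" and \<mu>: "0 < \<mu>"
    and ws: "length ws = n" "\<forall>z. (\<Prod>i<n. z - ws!i) = z^n + 1" "separated \<mu> ws"
    and R: "S * 2^(n-1) < R * (\<mu>/2)^(n-1)"
    and large: "1 \<le> cmod a" "S \<le> cmod a" "4 * R \<le> \<mu> * cmod a"
  shows "\<exists>ys. length ys = n \<and> mset ys = proots (fpoly n e a) \<and> separated (\<mu> * cmod a / 2) ys"
proof -
  define t where "t = cmod a"
  have t: "1 \<le> t" and a: "a \<noteq> 0" using large(1) by (auto simp: t_def)
  have "0 < R * (\<mu>/2)^(n-1)"
    using R by (smt (verit) S_def sum_nonneg norm_ge_zero zero_le_mult_iff zero_le_power)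
  hence R_pos: "0 < R" using \<mu> by (simp add: zero_less_mult_iff)
  define xs where "xs = map ((*) a) ws"
  have xs: "length xs = n" "separated (\<mu> * t) xs"
    using ws(1) separated_scale[OF ws(3), of a] by (simp_all add: xs_def t_def mult.commute)
  have xs_prod: "poly (fpoly n (\<lambda>_. 0) a) z = (\<Prod>i<n. z - xs!i)" for z
  proof -
    have "(\<Prod>i<n. z - xs!i) = (\<Prod>i<n. z - a * ws!i)"
      using ws(1) by (intro prod.cong) (auto simp: xs_def)
    thus ?thesis using scaled_roots_product[OF ws(1,2) a] by (simp add: poly_fpoly)
  qed
  have "\<exists>ys. length ys = n \<and> mset ys = proots (fpoly n e a) \<and> (\<forall>i<n. cmod (xs!i - ys!i) < R)"
  proof (rule fpoly_roots_matching[OF n large(1) _ _ xs(1) _ xs(2)])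
    show "\<forall>z. cmod z < 2 * cmod a \<longrightarrow>
            cmod (\<Sum>k = 1..n - 1. (0 - e k) * z^k) < R * (\<mu> * t / 2)^(n-1)"
    proof (intro allI impI)
      fix z assume "cmod z < 2 * cmod a"
      hence "cmod (\<Sum>k = 1..n - 1. (0 - e k) * z^k) \<le> S * (2 * t)^(n-1)"
        using t norm_sum_monomials_le[of "{1..n - 1}" "\<lambda>k. 0 - e k" "n - 1" "2 * t" z]
        by (simp add: S_def t_def)
      also have "\<dots> = S * 2^(n-1) * t^(n-1)" by (simp add: power_mult_distrib)
      also have "\<dots> < R * (\<mu>/2)^(n-1) * t^(n-1)" using R t by (intro mult_strict_right_mono) auto
      also have "\<dots> = R * (\<mu> * t / 2)^(n-1)" by (simp add: power_mult_distrib power_divide)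
      finally show "cmod (\<Sum>k = 1..n - 1. (0 - e k) * z^k) < R * (\<mu> * t / 2)^(n-1)" .
    qed
  qed (use xs_prod large(2,3) R_pos in \<open>auto simp: S_def t_def\<close>)
  then obtain ys where ys: "length ys = n" "mset ys = proots (fpoly n e a)"
    "\<forall>i<n. cmod (xs!i - ys!i) < R" by blast
  have "separated (\<mu> * t / 2) ys"
    using separated_perturb[OF xs(2)] ys xs(1) large(3) by (auto simp: t_def)
  thus ?thesis using ys(1,2) by (auto simp: t_def)
qed

(* Step 2: two members of the family with the same z^(n-1) coefficient differ by a polynomial of
   degree <= n - 2, which is small against the separation (mu |a| / 2) of the roots of the first:
   their roots are within eps of each other. *)
lemma roots_match_same_top_coeff:
  fixes n :: nat and d e :: "nat \<Rightarrow> complex" and ys :: "complex list" and a :: complex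
  defines "D \<equiv> \<Sum>k = 1..n - 1. cmod (d k - e k)"
  assumes n: "n \<ge> 2" and \<epsilon>: "0 < \<epsilon>" and \<mu>: "0 < \<mu>" and top: "d (n - 1) = e (n - 1)"
    and ys: "mset ys = proots (fpoly n d a)" "separated (\<mu> * cmod a / 2) ys"
    and large: "1 \<le> cmod a" "(\<Sum>k = 1..n - 1. cmod (d k)) \<le> cmod a"
      "(\<Sum>k = 1..n - 1. cmod (e k)) \<le> cmod a" "4 * \<epsilon> \<le> \<mu> * cmod a"
      "D * 2^(n-2) < \<epsilon> * (\<mu>/4)^(n-1) * cmod a"
  shows "\<bar>dF (proots (fpoly n d a)) (proots (fpoly n e a))\<bar> < \<epsilon>"
proof -
  define t where "t = cmod a"
  have t: "1 \<le> t" using large(1) by (simp add: t_def)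
  have "n - 1 = Suc (n - 2)" using n by simp
  hence t_pow: "t^(n-1) = t * t^(n-2)" by simp
  have t_pow_pos: "0 < t^(n-2)" using t by (intro zero_less_power) linarith
  have len: "length ys = n"
    using ys(1) fpoly_monic[of n] n by (metis size_mset size_proots_complex not_numeral_le_zero gr0I)
  have ys_prod: "poly (fpoly n d a) z = (\<Prod>i<n. z - ys!i)" for z
    using poly_eq_root_product[OF _ ys(1)] fpoly_monic[of n] n len by simp
  have low: "\<forall>k \<in> {1..n - 1}. d k - e k \<noteq> 0 \<longrightarrow> k \<le> n - 2"
  proof (intro ballI impI)
    fix k assume k: "k \<in> {1..n - 1}" "d k - e k \<noteq> 0"
    hence "k \<noteq> n - 1" using top by auto
    thus "k \<le> n - 2" using k(1) by auto
  qed
  have "\<exists>zs. length zs = n \<and> mset zs = proots (fpoly n e a) \<and> (\<forall>i<n. cmod (ys!i - zs!i) < \<epsilon>)"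
  proof (rule fpoly_roots_matching[OF n large(1-3) len _ ys(2)])
    show "\<forall>z. cmod z < 2 * cmod a \<longrightarrow>
            cmod (\<Sum>k = 1..n - 1. (d k - e k) * z^k) < \<epsilon> * (\<mu> * cmod a / 2 / 2)^(n-1)"
    proof (intro allI impI)
      fix z assume "cmod z < 2 * cmod a"
      hence "cmod (\<Sum>k = 1..n - 1. (d k - e k) * z^k) \<le> D * (2 * t)^(n-2)"
        using t low norm_sum_monomials_le[of "{1..n - 1}" "\<lambda>k. d k - e k" "n - 2" "2 * t" z]
        by (simp add: D_def t_def)
      also have "\<dots> = D * 2^(n-2) * t^(n-2)" by (simp add: power_mult_distrib)
      also have "\<dots> < \<epsilon> * (\<mu>/4)^(n-1) * t * t^(n-2)" using large(5) t_pow_pos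
        by (intro mult_strict_right_mono) (auto simp: t_def)
      also have "\<dots> = \<epsilon> * (\<mu>/4)^(n-1) * t^(n-1)" unfolding t_pow by (simp add: mult_ac)
      also have "\<dots> = \<epsilon> * (\<mu>/4 * t)^(n-1)" by (simp only: power_mult_distrib mult.assoc)
      also have "\<dots> = \<epsilon> * (\<mu> * cmod a / 2 / 2)^(n-1)" by (simp add: t_def)
      finally show "cmod (\<Sum>k = 1..n - 1. (d k - e k) * z^k) < \<epsilon> * (\<mu> * cmod a / 2 / 2)^(n-1)" .
    qed
  qed (use ys_prod large(4) \<epsilon> in auto)
  then obtain zs where zs: "length zs = n" "mset zs = proots (fpoly n e a)"
    "\<forall>i<n. cmod (ys!i - zs!i) < \<epsilon>" by blast
  show ?thesis using dF_less_if_paired[OF len zs(1) _ zs(3)] ys(1) zs(2) n by simp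
qed

lemma dF_trinomial_full_less:
  fixes n :: nat and c :: "nat \<Rightarrow> complex" and ws :: "complex list" and a :: complex
  defines "b \<equiv> \<lambda>k. if k = n - 1 then c k else 0"
    and "S \<equiv> \<Sum>k = 1..n - 1. cmod (c k)"
  assumes n: "n \<ge> 2" and \<epsilon>: "0 < \<epsilon>" and \<mu>: "0 < \<mu>"
    and ws: "length ws = n" "\<forall>z. (\<Prod>i<n. z - ws!i) = z^n + 1" "separated \<mu> ws"
    and R: "S * 2^(n-1) < R * (\<mu>/2)^(n-1)"
    and large: "1 \<le> cmod a" "S \<le> cmod a" "4 * R / \<mu> \<le> cmod a" "4 * \<epsilon> / \<mu> \<le> cmod a"
               "S * 2^(n-2) / (\<epsilon> * (\<mu>/4)^(n-1)) < cmod a"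
  shows "\<bar>dF (proots (fpoly n b a)) (proots (fpoly n c a))\<bar> < \<epsilon>"
proof -
  have S_b: "(\<Sum>k = 1..n - 1. cmod (b k)) \<le> S" and S_bc: "(\<Sum>k = 1..n - 1. cmod (b k - c k)) \<le> S"
    unfolding S_def by (auto intro!: sum_mono simp: b_def)
  have R_a: "4 * R \<le> \<mu> * cmod a" and \<epsilon>_a: "4 * \<epsilon> \<le> \<mu> * cmod a"
    using large(3,4) \<mu> by (simp_all add: pos_divide_le_eq mult.commute)
  have "S * 2^(n-2) < \<epsilon> * (\<mu>/4)^(n-1) * cmod a"
    using large(5) \<epsilon> \<mu> by (simp add: pos_divide_less_eq mult.commute)
  hence S_a: "(\<Sum>k = 1..n - 1. cmod (b k - c k)) * 2^(n-2) < \<epsilon> * (\<mu>/4)^(n-1) * cmod a"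
    using S_bc by (smt (verit) mult_right_mono zero_le_power)
  have R_b: "(\<Sum>k = 1..n - 1. cmod (b k)) * 2^(n-1) < R * (\<mu>/2)^(n-1)"
    using R S_b by (smt (verit) mult_right_mono zero_le_power)
  obtain ys where "mset ys = proots (fpoly n b a)" "separated (\<mu> * cmod a / 2) ys"
    using roots_near_scaled_unit_roots[OF n \<mu> ws R_b large(1)] S_b large(2) R_a by auto
  thus ?thesis
    using roots_match_same_top_coeff[OF n \<epsilon> \<mu> _ _ _ large(1) _ _ \<epsilon>_a S_a] S_b large(2)
    by (simp add: b_def S_def)
qed

lemma dF_trinomial_full_tendsto_0:
  fixes n :: nat and c :: "nat \<Rightarrow> complex"
  defines "b \<equiv> \<lambda>k. if k = n - 1 then c k else 0"
  assumes n: "n \<ge> 2"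
  shows "((\<lambda>a. dF (proots (fpoly n b a)) (proots (fpoly n c a))) \<longlongrightarrow> 0) at_infinity"
proof (rule tendstoI)
  fix \<epsilon> :: real assume \<epsilon>: "0 < \<epsilon>"
  obtain ws :: "complex list"
    where ws: "length ws = n" "distinct ws" "\<forall>z. (\<Prod>i<n. z - ws!i) = z^n + 1"
    using roots_of_minus_one[of n] n by auto
  obtain \<mu> where \<mu>: "0 < \<mu>" "separated \<mu> ws" using distinct_imp_separated[OF ws(2)] by blast
  define S where "S = (\<Sum>k = 1..n - 1. cmod (c k))"
  define R where "R = S * 2^(n-1) / (\<mu>/2)^(n-1) + 1"
  have R: "S * 2^(n-1) < R * (\<mu>/2)^(n-1)" using \<mu> by (simp add: R_def field_simps)
  define T where "T = max (max 1 S) (max (4 * R / \<mu>) (max (4 * \<epsilon> / \<mu>)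
                        (S * 2^(n-2) / (\<epsilon> * (\<mu>/4)^(n-1)))))"
  have "\<forall>\<^sub>F a in at_infinity. T < cmod a"
    unfolding eventually_at_infinity by (rule exI[of _ "T + 1"]) simp
  thus "\<forall>\<^sub>F a in at_infinity. dist (dF (proots (fpoly n b a)) (proots (fpoly n c a))) 0 < \<epsilon>"
  proof (rule eventually_mono)
    fix a :: complex assume "T < cmod a"
    hence large: "1 \<le> cmod a" "S \<le> cmod a" "4 * R / \<mu> \<le> cmod a" "4 * \<epsilon> / \<mu> \<le> cmod a"
      "S * 2^(n-2) / (\<epsilon> * (\<mu>/4)^(n-1)) < cmod a" by (simp_all add: T_def)
    show "dist (dF (proots (fpoly n b a)) (proots (fpoly n c a))) 0 < \<epsilon>"
      using dF_trinomial_full_less[OF n \<epsilon> \<mu>(1) ws(1,3) \<mu>(2) R[unfolded S_def] large[unfolded S_def]]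
      by (simp add: b_def)
  qed
qed

theorem corollary4p7:
  fixes n :: nat and c :: "nat \<Rightarrow> complex"
  assumes "n \<ge> 2"
  defines "h \<equiv> \<lambda>a::complex. monom 1 n + monom (c (n - 1)) (n - 1) + [:a ^ n:]"
      and "f \<equiv> \<lambda>a::complex. monom 1 n + (\<Sum>k = 1..n - 1. monom (c k) k) + [:a ^ n:]"
  shows "((\<lambda>a. dF (Zroots (h a)) (Zroots (f a))) \<longlongrightarrow> 0) at_infinity"
proof -
  define b where "b = (\<lambda>k. if k = n - 1 then c k else 0)"
  have "(\<Sum>k = 1..n - 1. monom (b k) k) = monom (c (n - 1)) (n - 1)"
    using \<open>n \<ge> 2\<close> by (simp add: b_def if_distrib[of "\<lambda>x. monom x _"] cong: if_cong)
  hence "h = fpoly n b" and "f = fpoly n c"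
    by (simp_all add: h_def f_def fpoly_def fun_eq_iff)
  thus ?thesis using dF_trinomial_full_tendsto_0[OF \<open>n \<ge> 2\<close>] by (simp add: b_def)
qed

end
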